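(* Let $A=K[X_1,\ldots,X_n]$ be a polynomial ring over a field $K$, let $I\subseteq A$ be a homogeneous ideal, let $\prec$ be a monomial order on $A$, and let $G$ be the reduced Gr\"obner basis of $I$ with respect to $\prec$. Then $\operatorname{supp}(G)\subseteq \operatorname{cs}(I)$; that is, for every $f\in G$, the set $\operatorname{supp}(f)$ is a minimal element (with respect to inclusion) of $\{\operatorname{supp}(h) : h\in I,\ h\neq 0\}$.
   Context: For a nonzero polynomial $f\in A$, $\operatorname{supp}(f)$ denotes the set of monomials appearing in $f$ with nonzero coefficient. For a subset $S\subseteq A$, $\operatorname{supp}(S)$ is the set $\{\operatorname{supp}(f): f\in S,\ f\neq 0\}$. The circuits set $\operatorname{cs}(S)$ of a subset $S\subseteq A$ is the set of all minimal (with respect to inclusion) elements of $\operatorname{supp}(S)$. The reduced Gr\"obner basis of $I$ with respect to $\prec$ is the unique Gr\"obner basis $\{f_1,\dots,f_r\}$ of $I$ whose elements are monic with respect to $\prec$ and such that the leading monomial of $f_i$ divides no monomial of $\operatorname{supp}(f_j)$ for $i\neq j$. *)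

theory Defs
  imports Main "HOL-Library.Poly_Mapping"
begin

text \<open>Multivariate polynomials over a field 'k in the variables of a finite type 'v:
  a monomial is a finitely supported exponent vector, a polynomial is a finitely supported
  map from monomials to coefficients, with the convolution product of Poly_Mapping.\<close>

type_synonym ('v, 'k) mpoly = "('v \<Rightarrow>\<^sub>0 nat) \<Rightarrow>\<^sub>0 'k"

definition supp :: "('v, 'k::zero) mpoly \<Rightarrow> ('v \<Rightarrow>\<^sub>0 nat) set" where
  "supp f = Poly_Mapping.keys f"

definition supp_set :: "('v, 'k::zero) mpoly set \<Rightarrow> ('v \<Rightarrow>\<^sub>0 nat) set set" where
  "supp_set S = {supp f | f. f \<in> S \<and> f \<noteq> 0}"

definition cs :: "('v, 'k::zero) mpoly set \<Rightarrow> ('v \<Rightarrow>\<^sub>0 nat) set set" where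
  "cs S = {T \<in> supp_set S. \<forall>T' \<in> supp_set S. T' \<subseteq> T \<longrightarrow> T' = T}"

definition is_ideal :: "'a::comm_ring_1 set \<Rightarrow> bool" where
  "is_ideal I \<longleftrightarrow> 0 \<in> I \<and> (\<forall>f\<in>I. \<forall>g\<in>I. f + g \<in> I) \<and> (\<forall>f\<in>I. \<forall>h. h * f \<in> I)"

definition ideal_gen :: "'a::comm_ring_1 set \<Rightarrow> 'a set" where
  "ideal_gen S = \<Inter>{J. is_ideal J \<and> S \<subseteq> J}"

definition mdeg :: "('v \<Rightarrow>\<^sub>0 nat) \<Rightarrow> nat" where
  "mdeg m = sum (Poly_Mapping.lookup m) (Poly_Mapping.keys m)"

definition homogeneous :: "('v, 'k::zero) mpoly \<Rightarrow> bool" where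
  "homogeneous f \<longleftrightarrow> (\<exists>d. \<forall>m \<in> Poly_Mapping.keys f. mdeg m = d)"

definition homogeneous_ideal :: "('v, 'k::comm_ring_1) mpoly set \<Rightarrow> bool" where
  "homogeneous_ideal I \<longleftrightarrow> is_ideal I \<and> (\<exists>S. (\<forall>s\<in>S. homogeneous s) \<and> I = ideal_gen S)"

definition monomial_order :: "(('v \<Rightarrow>\<^sub>0 nat) \<Rightarrow> ('v \<Rightarrow>\<^sub>0 nat) \<Rightarrow> bool) \<Rightarrow> bool" where
  "monomial_order lt \<longleftrightarrow>
     (\<forall>a. \<not> lt a a) \<and>
     (\<forall>a b c. lt a b \<longrightarrow> lt b c \<longrightarrow> lt a c) \<and>
     (\<forall>a b. a \<noteq> b \<longrightarrow> lt a b \<or> lt b a) \<and>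
     wf {(a, b). lt a b} \<and>
     (\<forall>a b c. lt a b \<longrightarrow> lt (a + c) (b + c))"

definition lm :: "(('v \<Rightarrow>\<^sub>0 nat) \<Rightarrow> ('v \<Rightarrow>\<^sub>0 nat) \<Rightarrow> bool) \<Rightarrow> ('v, 'k::zero) mpoly \<Rightarrow> ('v \<Rightarrow>\<^sub>0 nat)" where
  "lm lt f = (THE m. m \<in> Poly_Mapping.keys f \<and> (\<forall>m' \<in> Poly_Mapping.keys f. m' = m \<or> lt m' m))"

definition mdvd :: "('v \<Rightarrow>\<^sub>0 nat) \<Rightarrow> ('v \<Rightarrow>\<^sub>0 nat) \<Rightarrow> bool" where
  "mdvd m m' \<longleftrightarrow> (\<exists>c. m' = m + c)"

definition groebner_basis ::
  "(('v \<Rightarrow>\<^sub>0 nat) \<Rightarrow> ('v \<Rightarrow>\<^sub>0 nat) \<Rightarrow> bool) \<Rightarrow> ('v, 'k::field) mpoly set \<Rightarrow> ('v, 'k) mpoly set \<Rightarrow> bool" where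
  "groebner_basis lt I G \<longleftrightarrow> finite G \<and> G \<subseteq> I \<and> 0 \<notin> G \<and>
     (\<forall>f \<in> I. f \<noteq> 0 \<longrightarrow> (\<exists>g \<in> G. mdvd (lm lt g) (lm lt f)))"

definition reduced_groebner_basis ::
  "(('v \<Rightarrow>\<^sub>0 nat) \<Rightarrow> ('v \<Rightarrow>\<^sub>0 nat) \<Rightarrow> bool) \<Rightarrow> ('v, 'k::field) mpoly set \<Rightarrow> ('v, 'k) mpoly set \<Rightarrow> bool" where
  "reduced_groebner_basis lt I G \<longleftrightarrow> groebner_basis lt I G \<and>
     (\<forall>g \<in> G. Poly_Mapping.lookup g (lm lt g) = 1) \<and>
     (\<forall>g \<in> G. \<forall>g' \<in> G. g \<noteq> g' \<longrightarrow> (\<forall>m \<in> supp g'. \<not> mdvd (lm lt g) m))"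

end

theory Submission
  imports Defs
begin

lemma lookup_single_zero_mult:
  "Poly_Mapping.lookup (Poly_Mapping.single 0 a * p) m = a * Poly_Mapping.lookup p m"
  unfolding mult_map_scale_conv_mult[symmetric]
  by (simp add: Poly_Mapping.map.rep_eq when_def)

lemma monomial_orderD:
  assumes "monomial_order lt"
  shows "\<not> lt a a" "lt a b \<Longrightarrow> lt b c \<Longrightarrow> lt a c"
    "a \<noteq> b \<Longrightarrow> lt a b \<or> lt b a" "wf {(a, b). lt a b}"
    "lt a b \<Longrightarrow> lt (a + c) (b + c)"
  using assms unfolding monomial_order_def by simp_all

lemma monomial_order_finite_has_greatest:
  assumes mo: "monomial_order lt" and "finite S" and "S \<noteq> {}"
  shows "\<exists>m\<in>S. \<forall>m'\<in>S. m' = m \<or> lt m' m"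
  using \<open>finite S\<close> \<open>S \<noteq> {}\<close>
proof (induction S rule: finite_ne_induct)
  case (singleton x)
  then show ?case by simp
next
  case (insert x F)
  then obtain m where m: "m \<in> F" "\<forall>m'\<in>F. m' = m \<or> lt m' m" by blast
  consider "x = m \<or> lt x m" | "lt m x" using monomial_orderD(3)[OF mo, of x m] by blast
  then show ?case
  proof cases
    case 1
    then show ?thesis using m by auto
  next
    case 2
    then have "\<forall>m'\<in>insert x F. m' = x \<or> lt m' x"
      using m monomial_orderD(2)[OF mo, of _ m x] by auto
    then show ?thesis by blast
  qed
qed

lemma lm_greatest:
  assumes mo: "monomial_order lt" and "f \<noteq> 0"
  shows "lm lt f \<in> Poly_Mapping.keys f"
    and "\<forall>m\<in>Poly_Mapping.keys f. m = lm lt f \<or> lt m (lm lt f)"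
proof -
  obtain m where m: "m \<in> Poly_Mapping.keys f" "\<forall>m'\<in>Poly_Mapping.keys f. m' = m \<or> lt m' m"
    using monomial_order_finite_has_greatest[OF mo finite_keys] \<open>f \<noteq> 0\<close> by auto
  have "lm lt f = m"
    unfolding lm_def
  proof (rule the_equality)
    fix n assume n: "n \<in> Poly_Mapping.keys f \<and> (\<forall>m'\<in>Poly_Mapping.keys f. m' = n \<or> lt m' n)"
    then have "m = n \<or> lt m n" and "n = m \<or> lt n m" using m by blast+
    then show "n = m" using monomial_orderD(1)[OF mo, of n] monomial_orderD(2)[OF mo, of n m n] by blast
  qed (use m in blast)
  then show "lm lt f \<in> Poly_Mapping.keys f"
    and "\<forall>m\<in>Poly_Mapping.keys f. m = lm lt f \<or> lt m (lm lt f)"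
    using m by simp_all
qed

text \<open>Otherwise \<open>0 \<succ> c \<succ> 2c \<succ> \<dots>\<close> would be an infinite descending chain.\<close>
lemma monomial_order_not_lt_zero:
  assumes mo: "monomial_order lt"
  shows "\<not> lt c 0"
proof
  assume c: "lt c 0"
  define f where "f i = ((+) c ^^ i) 0" for i
  have "(f (Suc i), f i) \<in> {(a, b). lt a b}" for i
    using monomial_orderD(5)[OF mo c, of "f i"] by (simp add: f_def)
  then show False
    using monomial_orderD(4)[OF mo] by (auto simp: wf_iff_no_infinite_down_chain)
qed

lemma mdvd_imp_not_lt:
  assumes mo: "monomial_order lt" and "mdvd a b"
  shows "\<not> lt b a"
proof
  assume ba: "lt b a"
  obtain c where c: "b = a + c" using \<open>mdvd a b\<close> unfolding mdvd_def by blast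
  then have "c \<noteq> 0" using ba monomial_orderD(1)[OF mo] by auto
  then have "lt 0 c"
    using monomial_orderD(3)[OF mo] monomial_order_not_lt_zero[OF mo] by blast
  then have "lt a b"
    using monomial_orderD(5)[OF mo, of 0 c a] c by (simp add: add.commute)
  then show False using ba monomial_orderD(1,2)[OF mo] by blast
qed

lemma reduced_groebner_lm_eq_of_supp_subset:
  assumes mo: "monomial_order lt" and rgb: "reduced_groebner_basis lt I G"
    and "g \<in> G" and "h \<in> I" and "h \<noteq> 0" and "supp h \<subseteq> supp g"
  shows "lm lt h = lm lt g"
proof -
  have lm_h: "lm lt h \<in> supp g"
    using lm_greatest(1)[OF mo \<open>h \<noteq> 0\<close>] \<open>supp h \<subseteq> supp g\<close> unfolding supp_def by blast
  obtain g' where "g' \<in> G" and dvd: "mdvd (lm lt g') (lm lt h)"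
    using rgb \<open>h \<in> I\<close> \<open>h \<noteq> 0\<close> unfolding reduced_groebner_basis_def groebner_basis_def by blast
  then have "g' = g"
    using rgb \<open>g \<in> G\<close> lm_h unfolding reduced_groebner_basis_def by blast
  then have "\<not> lt (lm lt h) (lm lt g)" using mdvd_imp_not_lt[OF mo dvd] by simp
  moreover have "g \<noteq> 0"
    using rgb \<open>g \<in> G\<close> unfolding reduced_groebner_basis_def groebner_basis_def by blast
  ultimately show ?thesis
    using lm_greatest(2)[OF mo] lm_h unfolding supp_def by blast
qed

lemma reduced_groebner_supp_minimal:
  assumes mo: "monomial_order lt" and "is_ideal I" and rgb: "reduced_groebner_basis lt I G"
    and "g \<in> G" and "h \<in> I" and "h \<noteq> 0" and "supp h \<subseteq> supp g"
  shows "supp h = supp g"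
proof -
  have "g \<in> I" and monic: "Poly_Mapping.lookup g (lm lt g) = 1"
    using rgb \<open>g \<in> G\<close> unfolding reduced_groebner_basis_def groebner_basis_def by blast+
  have lm_h: "lm lt h = lm lt g"
    using reduced_groebner_lm_eq_of_supp_subset assms(1,3-7) .
  define a where "a = Poly_Mapping.lookup h (lm lt g)"
  have "a \<noteq> 0" using lm_greatest(1)[OF mo \<open>h \<noteq> 0\<close>] lm_h by (simp add: a_def in_keys_iff)
  define r where "r = h + Poly_Mapping.single 0 (- a) * g"
  have "r \<in> I" using \<open>is_ideal I\<close> \<open>h \<in> I\<close> \<open>g \<in> I\<close> unfolding r_def is_ideal_def by blast
  have lookup_r: "Poly_Mapping.lookup r m = Poly_Mapping.lookup h m - a * Poly_Mapping.lookup g m"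
    for m unfolding r_def by (simp add: lookup_add lookup_single_zero_mult)
  have "supp r \<subseteq> supp g"
    using \<open>supp h \<subseteq> supp g\<close> unfolding supp_def subset_iff by (auto simp: in_keys_iff lookup_r)
  moreover have "lm lt g \<notin> supp r"
    unfolding supp_def by (simp add: in_keys_iff lookup_r monic a_def)
  ultimately have "r = 0"
    using reduced_groebner_lm_eq_of_supp_subset[OF mo rgb \<open>g \<in> G\<close> \<open>r \<in> I\<close>]
      lm_greatest(1)[OF mo] unfolding supp_def by metis
  then have "Poly_Mapping.lookup h m = a * Poly_Mapping.lookup g m" for m
    using lookup_r[of m] by simp
  then show ?thesis using \<open>a \<noteq> 0\<close> unfolding supp_def by (auto simp: in_keys_iff)
qed

theorem lemma2p2:
  fixes I G :: "('v::finite, 'k::field) mpoly set"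
    and lt :: "('v \<Rightarrow>\<^sub>0 nat) \<Rightarrow> ('v \<Rightarrow>\<^sub>0 nat) \<Rightarrow> bool"
  assumes "homogeneous_ideal I"
    and "monomial_order lt"
    and "reduced_groebner_basis lt I G"
  shows "supp_set G \<subseteq> cs I"
proof
  fix T assume "T \<in> supp_set G"
  then obtain g where "g \<in> G" "g \<noteq> 0" and T: "T = supp g" unfolding supp_set_def by blast
  have "is_ideal I" using assms(1) unfolding homogeneous_ideal_def by blast
  have "G \<subseteq> I"
    using assms(3) unfolding reduced_groebner_basis_def groebner_basis_def by blast
  then have "T \<in> supp_set I" using \<open>g \<in> G\<close> \<open>g \<noteq> 0\<close> T unfolding supp_set_def by blast
  moreover have "T' = T" if "T' \<in> supp_set I" "T' \<subseteq> T" for T'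
    using that reduced_groebner_supp_minimal[OF assms(2) \<open>is_ideal I\<close> assms(3) \<open>g \<in> G\<close>] T
    unfolding supp_set_def by blast
  ultimately show "T \<in> cs I" unfolding cs_def by blast
qed

end
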